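(* For any (reachable) CCSK process $X$ and any $e_1,e_2\in\mathrm{ev}(X)$: $e_1\le e_2$ if and only if $\mathrm{key}(e_1)\le_X\mathrm{key}(e_2)$.
   Context: Names $\mathsf N$ with bijection $\overline\cdot$ onto disjoint co-names; $\mathsf L=\mathsf N\cup\overline{\mathsf N}\cup\{\tau\}$ ($\alpha$ over $\mathsf L$, $\lambda$ over $\mathsf L\setminus\{\tau\}$); keys $\mathsf K$ denumerable. CCSK processes $X::=\mathbf 0\mid\alpha.X\mid X\backslash\lambda\mid X+Y\mid X|Y\mid\alpha[k].X$; $\mathrm{keys}(X)$ keys in $X$; standard means no keys. Directions $D\in\{\mathrm L,\mathrm R\}$, $\bar{\mathrm L}=\mathrm R$, $\bar{\mathrm R}=\mathrm L$. Proof keyed labels $\theta::=\upsilon\alpha[k]\mid\upsilon\langle\upsilon_1\lambda[k],\upsilon_2\overline\lambda[k]\rangle$ ($\upsilon,\upsilon_i\in\{|_{\mathrm L},|_{\mathrm R},+_{\mathrm L},+_{\mathrm R}\}^*$), $\ell(\upsilon\alpha[k])=\alpha$, $\ell(\upsilon\langle\cdots\rangle)=\tau$, $\mathrm{key}(\theta)=k$. Forward CCSK$^{\mathrm P}$ transitions: least relation closed under (act) $\alpha.X\xrightarrow{\alpha[k]}\alpha[k].X$ if $\mathrm{keys}(X)=\emptyset$; (pre) $X\xrightarrow\theta X',\mathrm{key}(\theta)\ne k\Rightarrow\alpha[k].X\xrightarrow\theta\alpha[k].X'$; (res) $X\xrightarrow\theta X',\ell(\theta)\notin\{\lambda,\overline\lambda\}\Rightarrow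 X\backslash\lambda\xrightarrow\theta X'\backslash\lambda$; (par) $X\xrightarrow\theta X',\mathrm{key}(\theta)\notin\mathrm{keys}(Y)\Rightarrow X|Y\xrightarrow{|_{\mathrm L}\theta}X'|Y$, $Y|X\xrightarrow{|_{\mathrm R}\theta}Y|X'$; (syn) $X\xrightarrow{\upsilon_1\lambda[k]}X',Y\xrightarrow{\upsilon_2\overline\lambda[k]}Y'\Rightarrow X|Y\xrightarrow{\langle\upsilon_1\lambda[k],\upsilon_2\overline\lambda[k]\rangle}X'|Y'$; (sum) $X\xrightarrow\theta X',\mathrm{keys}(Y)=\emptyset\Rightarrow X+Y\xrightarrow{+_{\mathrm L}\theta}X'+Y$, $Y+X\xrightarrow{+_{\mathrm R}\theta}Y+X'$. Backward transitions are converses; $\bar t$ is the inverse of $t$. A path is a sequence of composable transitions; it is rooted if its source cannot perform a backward transition. $X$ is reachable if there is a path from a standard process to $X$. Transitions are connected if there is a path from the source of one to the target of the other. Independence $\iota$ on proof labels: least relation closed under (C1) $+_D\theta\mathrel\iota+_D\theta'$ if $\theta\mathrel\iota\theta'$; (P1) $|_D\theta\mathrel\iota|_D\theta'$ if $\theta\mathrel\iota\theta'$; (P2$_k$) $|_D\theta\mathrel\iota|_{\bar D}\theta'$ if keys differ; (S1) $|_D\theta\mathrel\iota\langle\theta_{\mathrm L},\theta_{\mathrm R}\rangle$ if $\theta\mathrel\iota\theta_D$; (S2) $\langle\theta_{\mathrm L},\theta_{\mathrm R}\rangle\mathrel\iota|_D\theta$ if $\theta_D\mathrel\iota\theta$;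 (S3) $\langle\theta_1,\theta_2\rangle\mathrel\iota\langle\theta_1',\theta_2'\rangle$ if $\theta_1\mathrel\iota\theta_1'$, $\theta_2\mathrel\iota\theta_2'$. On CCSK$^{\mathrm P}$ transitions $t\mathrel\iota u$ iff connected and labels $\iota$. Events: $\sim$ is the smallest equivalence on CCSK$^{\mathrm P}$ transitions with $t\sim t'$ whenever $t:P\to Q$, $u:P\to R$, $u':Q\to S$, $t':R\to S$ ($u'$ with label and direction of $u$, $t'$ of $t$) and $t\mathrel\iota u$; events are classes $[t]$, forward events are classes of forward transitions, $\bar e=[\bar t]$; all transitions of an event have the same key, denoted $\mathrm{key}(e)$. $\sharp(\varepsilon,e)=0$, $\sharp(tr,e)=\sharp(r,e)+1$ if $t\in e$, $\sharp(r,e)-1$ if $t\in\bar e$, else $\sharp(r,e)$. For forward events, $e\le e'$ iff every rooted path $r$ with $\sharp(r,e')>0$ has $\sharp(r,e)>0$. $\mathrm{ev}(X)$ is the set of forward events $e$ such that some rooted path $r$ with target $X$ has $\sharp(r,e)>0$. The partial order $\le_X$ on $\mathrm{keys}(X)$ is the reflexive transitive closure of $\mathrm{ord}(X)$, where $\mathrm{ord}(\mathbf 0)=\emptyset$, $\mathrm{ord}(\alpha.X)=\mathrm{ord}(X\backslash\lambda)=\mathrm{ord}(X)$, $\mathrm{ord}(X+Y)=\mathrm{ord}(X|Y)=\mathrm{ord}(X)\cup\mathrm{ord}(Y)$, and $\mathrm{ord}(\alpha[n].X)=\mathrm{ord}(X)\cup\{(n,k)\mid k\in\mathrm{keys}(X)\}$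 (pairs $(n,k)$ meaning $n<k$). *)

theory Defs
  imports Main
begin

datatype 'n lab = Nm 'n | CoNm 'n

fun cobar :: "'n lab \<Rightarrow> 'n lab" where
  "cobar (Nm a) = CoNm a"
| "cobar (CoNm a) = Nm a"

datatype 'n act = Vis "'n lab" | Tau

type_synonym key = nat

datatype 'n proc =
    Nil0
  | Pref "'n act" "'n proc"
  | Restr "'n proc" "'n lab"
  | Choice "'n proc" "'n proc"
  | Par "'n proc" "'n proc"
  | Keyed "'n act" key "'n proc"

fun keys :: "'n proc \<Rightarrow> key set" where
  "keys Nil0 = {}"
| "keys (Pref a X) = keys X"
| "keys (Restr X l) = keys X"
| "keys (Choice X Y) = keys X \<union> keys Y"
| "keys (Par X Y) = keys X \<union> keys Y"
| "keys (Keyed a k X) = insert k (keys X)"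

definition standard :: "'n proc \<Rightarrow> bool" where
  "standard X \<longleftrightarrow> keys X = {}"

datatype dir = DL | DR

fun dbar :: "dir \<Rightarrow> dir" where
  "dbar DL = DR"
| "dbar DR = DL"

datatype op = OPar dir | OSum dir

text \<open>Base a k is alpha[k]; Pfx p theta prepends p to the prefix string;
  Syn th1 th2 is the synchronisation label <th1, th2>.\<close>

datatype 'n plab = Base "'n act" key | Pfx op "'n plab" | Syn "'n plab" "'n plab"

fun pkey :: "'n plab \<Rightarrow> key" where
  "pkey (Base a k) = k"
| "pkey (Pfx p th) = pkey th"
| "pkey (Syn th1 th2) = pkey th1"

fun plbl :: "'n plab \<Rightarrow> 'n act" where
  "plbl (Base a k) = a"
| "plbl (Pfx p th) = plbl th"
| "plbl (Syn th1 th2) = Tau"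

inductive fwd :: "'n proc \<Rightarrow> 'n plab \<Rightarrow> 'n proc \<Rightarrow> bool" where
  act: "keys X = {} \<Longrightarrow> fwd (Pref a X) (Base a k) (Keyed a k X)"
| pre: "fwd X th X' \<Longrightarrow> pkey th \<noteq> k \<Longrightarrow> fwd (Keyed a k X) th (Keyed a k X')"
| res: "fwd X th X' \<Longrightarrow> plbl th \<noteq> Vis l \<Longrightarrow> plbl th \<noteq> Vis (cobar l)
        \<Longrightarrow> fwd (Restr X l) th (Restr X' l)"
| parL: "fwd X th X' \<Longrightarrow> pkey th \<notin> keys Y \<Longrightarrow> fwd (Par X Y) (Pfx (OPar DL) th) (Par X' Y)"
| parR: "fwd X th X' \<Longrightarrow> pkey th \<notin> keys Y \<Longrightarrow> fwd (Par Y X) (Pfx (OPar DR) th) (Par Y X')"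
| syn: "fwd X th1 X' \<Longrightarrow> fwd Y th2 Y' \<Longrightarrow> plbl th1 = Vis l \<Longrightarrow> plbl th2 = Vis (cobar l)
        \<Longrightarrow> pkey th1 = pkey th2 \<Longrightarrow> fwd (Par X Y) (Syn th1 th2) (Par X' Y')"
| sumL: "fwd X th X' \<Longrightarrow> keys Y = {} \<Longrightarrow> fwd (Choice X Y) (Pfx (OSum DL) th) (Choice X' Y)"
| sumR: "fwd X th X' \<Longrightarrow> keys Y = {} \<Longrightarrow> fwd (Choice Y X) (Pfx (OSum DR) th) (Choice Y X')"

text \<open>A transition (P, th, d, Q) goes from P to Q with label th; d = True means forward
  (fwd P th Q), d = False means backward (the converse: fwd Q th P).\<close>

type_synonym 'n trans = "'n proc \<times> 'n plab \<times> bool \<times> 'n proc"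

definition src :: "'n trans \<Rightarrow> 'n proc" where "src t = fst t"
definition tlab :: "'n trans \<Rightarrow> 'n plab" where "tlab t = fst (snd t)"
definition isfwd :: "'n trans \<Rightarrow> bool" where "isfwd t = fst (snd (snd t))"
definition tgt :: "'n trans \<Rightarrow> 'n proc" where "tgt t = snd (snd (snd t))"

definition is_trans :: "'n trans \<Rightarrow> bool" where
  "is_trans t \<longleftrightarrow> (if isfwd t then fwd (src t) (tlab t) (tgt t) else fwd (tgt t) (tlab t) (src t))"

definition tinv :: "'n trans \<Rightarrow> 'n trans" where
  "tinv t = (tgt t, tlab t, \<not> isfwd t, src t)"

inductive path :: "'n proc \<Rightarrow> 'n trans list \<Rightarrow> 'n proc \<Rightarrow> bool" where
  path_nil: "path P [] P"
| path_cons: "is_trans t \<Longrightarrow> src t = P \<Longrightarrow> path (tgt t) r Q \<Longrightarrow> path P (t # r) Q"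

definition root :: "'n proc \<Rightarrow> bool" where
  "root P \<longleftrightarrow> \<not> (\<exists>th P'. fwd P' th P)"

definition reachable :: "'n proc \<Rightarrow> bool" where
  "reachable X \<longleftrightarrow> (\<exists>P r. standard P \<and> path P r X)"

definition connected :: "'n trans \<Rightarrow> 'n trans \<Rightarrow> bool" where
  "connected t u \<longleftrightarrow> (\<exists>r. path (src t) r (tgt u)) \<or> (\<exists>r. path (src u) r (tgt t))"

inductive indep :: "'n plab \<Rightarrow> 'n plab \<Rightarrow> bool" where
  C1: "indep th th' \<Longrightarrow> indep (Pfx (OSum D) th) (Pfx (OSum D) th')"
| P1: "indep th th' \<Longrightarrow> indep (Pfx (OPar D) th) (Pfx (OPar D) th')"
| P2: "pkey th \<noteq> pkey th' \<Longrightarrow> indep (Pfx (OPar D) th) (Pfx (OPar (dbar D)) th')"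
| S1: "indep th (if D = DL then thL else thR) \<Longrightarrow> indep (Pfx (OPar D) th) (Syn thL thR)"
| S2: "indep (if D = DL then thL else thR) th \<Longrightarrow> indep (Syn thL thR) (Pfx (OPar D) th)"
| S3: "indep th1 th1' \<Longrightarrow> indep th2 th2' \<Longrightarrow> indep (Syn th1 th2) (Syn th1' th2')"

definition tindep :: "'n trans \<Rightarrow> 'n trans \<Rightarrow> bool" where
  "tindep t u \<longleftrightarrow> connected t u \<and> indep (tlab t) (tlab u)"

inductive sim :: "'n trans \<Rightarrow> 'n trans \<Rightarrow> bool" where
  sim_diamond: "t = (P, tht, dt, Q) \<Longrightarrow> u = (P, thu, du, R) \<Longrightarrow>
     u' = (Q, thu, du, S) \<Longrightarrow> t' = (R, tht, dt, S) \<Longrightarrow>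
     is_trans t \<Longrightarrow> is_trans u \<Longrightarrow> is_trans u' \<Longrightarrow> is_trans t' \<Longrightarrow>
     tindep t u \<Longrightarrow> sim t t'"
| sim_refl: "is_trans t \<Longrightarrow> sim t t"
| sim_sym: "sim t t' \<Longrightarrow> sim t' t"
| sim_trans: "sim t t' \<Longrightarrow> sim t' t'' \<Longrightarrow> sim t t''"

definition cls :: "'n trans \<Rightarrow> 'n trans set" where
  "cls t = {t'. sim t t'}"

definition fwd_event :: "'n trans set \<Rightarrow> bool" where
  "fwd_event e \<longleftrightarrow> (\<exists>t. is_trans t \<and> isfwd t \<and> e = cls t)"

definition ebar :: "'n trans set \<Rightarrow> 'n trans set" where
  "ebar e = cls (tinv (SOME t. t \<in> e))"

definition key_ev :: "'n trans set \<Rightarrow> key" where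
  "key_ev e = pkey (tlab (SOME t. t \<in> e))"

primrec sharp :: "'n trans list \<Rightarrow> 'n trans set \<Rightarrow> int" where
  "sharp [] e = 0"
| "sharp (t # r) e = sharp r e + (if t \<in> e then 1 else if t \<in> ebar e then -1 else 0)"

definition ev_le :: "'n trans set \<Rightarrow> 'n trans set \<Rightarrow> bool" where
  "ev_le e e' \<longleftrightarrow> (\<forall>P r Q. root P \<and> path P r Q \<and> sharp r e' > 0 \<longrightarrow> sharp r e > 0)"

definition ev :: "'n proc \<Rightarrow> 'n trans set set" where
  "ev X = {e. fwd_event e \<and> (\<exists>P r. root P \<and> path P r X \<and> sharp r e > 0)}"

fun ord :: "'n proc \<Rightarrow> (key \<times> key) set" where
  "ord Nil0 = {}"
| "ord (Pref a X) = ord X"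
| "ord (Restr X l) = ord X"
| "ord (Choice X Y) = ord X \<union> ord Y"
| "ord (Par X Y) = ord X \<union> ord Y"
| "ord (Keyed a n X) = ord X \<union> {(n, k) | k. k \<in> keys X}"

definition leX :: "'n proc \<Rightarrow> key \<Rightarrow> key \<Rightarrow> bool" where
  "leX X k1 k2 \<longleftrightarrow> k1 \<in> keys X \<and> k2 \<in> keys X \<and> (k1, k2) \<in> (ord X)\<^sup>*"

end

theory Submission
  imports Defs
begin

text \<open>An event is determined by the key k it introduces and by the causal past of k, i.e. the
  keys below k in the causal order together with the keyed prefixes carrying them. Diamonds of
  independent transitions preserve this data. Conversely, swapping causally unrelated actions
  to the end and undoing them shows that every forward transition is equivalent to the one in
  which only the causal past of its key has been performed, so transitions with the same data are
  equivalent. Hence the count of an event along a rooted path is 1 or 0 according to whether the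
  final process contains its causal past, and \<open>e\<^sub>1 \<le> e\<^sub>2\<close> says that every reachable process
  containing the past of \<open>key(e\<^sub>2)\<close> contains the past of \<open>key(e\<^sub>1)\<close>. Testing this on X with
  everything outside the past of \<open>key(e\<^sub>2)\<close> undone shows that it holds exactly when
  \<open>key(e\<^sub>1)\<close> lies in that past.\<close>

lemma ord_in_keys: "(a, b) \<in> ord P \<Longrightarrow> a \<in> keys P \<and> b \<in> keys P"
  by (induction P) auto

lemma finite_keys: "finite (keys P)"
  by (induction P) auto

lemma fwd_pkey_notin_keys: "fwd P th Q \<Longrightarrow> pkey th \<notin> keys P"
  by (induction rule: fwd.induct) auto

lemma keys_fwd: "fwd P th Q \<Longrightarrow> keys Q = insert (pkey th) (keys P)"
  by (induction rule: fwd.induct) auto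

lemma fwd_pkey_in_keys: "fwd P th Q \<Longrightarrow> pkey th \<in> keys Q"
  using keys_fwd by blast

lemma ord_fwd_mono: "fwd P th Q \<Longrightarrow> ord P \<subseteq> ord Q"
  by (induction rule: fwd.induct) (auto dest: keys_fwd)

lemma ord_fwd_subset: "fwd P th Q \<Longrightarrow> ord Q \<subseteq> ord P \<union> {(y, pkey th) | y. True}"
  by (induction rule: fwd.induct) (auto dest: keys_fwd)

lemma fwd_pkey_maximal: "fwd P th Q \<Longrightarrow> (pkey th, z) \<notin> ord Q"
  by (induction rule: fwd.induct) (auto dest: ord_in_keys)

inductive_cases fwd_PrefE: "fwd (Pref a X) th Q"
inductive_cases fwd_KeyedE: "fwd (Keyed a k X) th Q"
inductive_cases fwd_RestrE: "fwd (Restr X l) th Q"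
inductive_cases fwd_ChoiceE: "fwd (Choice X Y) th Q"
inductive_cases fwd_ParE: "fwd (Par X Y) th Q"

lemma fwd_deterministic: "fwd P th Q1 \<Longrightarrow> fwd P th Q2 \<Longrightarrow> Q1 = Q2"
  by (induction arbitrary: Q2 rule: fwd.induct)
    (blast elim!: fwd_PrefE fwd_KeyedE fwd_RestrE fwd_ChoiceE fwd_ParE)+

lemma fwd_backward_deterministic:
  "fwd P1 th1 Q \<Longrightarrow> fwd P2 th2 Q \<Longrightarrow> pkey th1 = pkey th2 \<Longrightarrow> th1 = th2 \<and> P1 = P2"
proof (induction arbitrary: P2 th2 rule: fwd.induct)
  case act
  from act.prems act.hyps show ?case by (cases rule: fwd.cases) (auto dest: fwd_pkey_in_keys)
next
  case pre
  from pre.prems pre.hyps show ?case by (cases rule: fwd.cases) (auto dest: pre.IH)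
next
  case res
  from res.prems show ?case by (cases rule: fwd.cases) (auto dest: res.IH)
next
  case parL
  from parL.prems parL.hyps show ?case
    by (cases rule: fwd.cases) (auto dest: parL.IH fwd_pkey_in_keys)
next
  case parR
  from parR.prems parR.hyps show ?case
    by (cases rule: fwd.cases) (auto dest: parR.IH fwd_pkey_in_keys)
next
  case syn
  from syn.prems syn.hyps show ?case
    by (cases rule: fwd.cases) (auto dest: syn.IH fwd_pkey_in_keys)
next
  case sumL
  from sumL.prems sumL.hyps show ?case
    by (cases rule: fwd.cases) (auto dest: sumL.IH fwd_pkey_in_keys)
next
  case sumR
  from sumR.prems sumR.hyps show ?case
    by (cases rule: fwd.cases) (auto dest: sumR.IH fwd_pkey_in_keys)
qed

section \<open>Projection onto a set of keys\<close>

fun erase :: "'n proc \<Rightarrow> 'n proc" where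
  "erase Nil0 = Nil0"
| "erase (Pref a X) = Pref a (erase X)"
| "erase (Restr X l) = Restr (erase X) l"
| "erase (Choice X Y) = Choice (erase X) (erase Y)"
| "erase (Par X Y) = Par (erase X) (erase Y)"
| "erase (Keyed a k X) = Pref a (erase X)"

text \<open>When K is down-closed for the causal order of X, \<open>proj_keys K X\<close> is X with every
  action whose key lies outside K undone.\<close>

fun proj_keys :: "key set \<Rightarrow> 'n proc \<Rightarrow> 'n proc" where
  "proj_keys K Nil0 = Nil0"
| "proj_keys K (Pref a X) = Pref a (proj_keys K X)"
| "proj_keys K (Restr X l) = Restr (proj_keys K X) l"
| "proj_keys K (Choice X Y) = Choice (proj_keys K X) (proj_keys K Y)"
| "proj_keys K (Par X Y) = Par (proj_keys K X) (proj_keys K Y)"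
| "proj_keys K (Keyed a k X) = (if k \<in> K then Keyed a k (proj_keys K X) else Pref a (erase X))"

definition down_closed :: "key set \<Rightarrow> (key \<times> key) set \<Rightarrow> bool" where
  "down_closed K R \<longleftrightarrow> (\<forall>a b. (a, b) \<in> R \<longrightarrow> b \<in> K \<longrightarrow> a \<in> K)"

lemma down_closed_antimono: "down_closed K R' \<Longrightarrow> R \<subseteq> R' \<Longrightarrow> down_closed K R"
  unfolding down_closed_def by blast

lemma down_closed_rtrancl:
  assumes "down_closed K R" and "(a, b) \<in> R\<^sup>*" and "b \<in> K"
  shows "a \<in> K"
  using assms(2,3)
  by (induction rule: converse_rtrancl_induct) (use assms(1) in \<open>auto simp: down_closed_def\<close>)

lemma keys_erase [simp]: "keys (erase X) = {}"
  by (induction X) auto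

lemma erase_standard: "keys X = {} \<Longrightarrow> erase X = X"
  by (induction X) auto

lemma erase_idem [simp]: "erase (erase X) = erase X"
  by (simp add: erase_standard)

lemma erase_fwd: "fwd P th Q \<Longrightarrow> erase Q = erase P"
  by (induction rule: fwd.induct) auto

lemma proj_keys_id: "keys X \<subseteq> K \<Longrightarrow> proj_keys K X = X"
  by (induction X) auto

lemma erase_proj_keys [simp]: "erase (proj_keys K X) = erase X"
  by (induction X) auto

lemma proj_keys_proj_keys: "proj_keys A (proj_keys B X) = proj_keys (A \<inter> B) X"
  by (induction X) (auto simp: proj_keys_id)

lemma keys_proj_keys_subset: "keys (proj_keys K X) \<subseteq> K \<inter> keys X"
  by (induction X) auto

lemma down_closed_Keyed_notin:
  "down_closed K (ord (Keyed a k X)) \<Longrightarrow> k \<notin> K \<Longrightarrow> keys X \<inter> K = {}"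
  unfolding down_closed_def by auto

lemma keys_proj_keys: "down_closed K (ord X) \<Longrightarrow> keys (proj_keys K X) = K \<inter> keys X"
proof (induction X)
  case (Keyed a k X)
  then show ?case
    using down_closed_Keyed_notin[OF Keyed.prems] by (auto intro: down_closed_antimono)
qed (auto intro: down_closed_antimono)

lemma ord_proj_keys: "down_closed K (ord X) \<Longrightarrow> ord (proj_keys K X) = ord X \<inter> (K \<times> K)"
proof (induction X)
  case (Keyed a k X)
  then have "down_closed K (ord X)" by (auto intro: down_closed_antimono)
  then show ?case
    using Keyed.IH keys_proj_keys down_closed_Keyed_notin[OF Keyed.prems]
    by (cases "k \<in> K") (auto dest: ord_in_keys)
qed (auto intro: down_closed_antimono)

lemma fwd_proj_keys:
  assumes "fwd P th Q" and "down_closed K (ord Q)"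
  shows "pkey th \<in> K \<Longrightarrow> fwd (proj_keys K P) th (proj_keys K Q)"
    and "pkey th \<notin> K \<Longrightarrow> proj_keys K P = proj_keys K Q"
proof -
  from assms have "(pkey th \<in> K \<longrightarrow> fwd (proj_keys K P) th (proj_keys K Q))
    \<and> (pkey th \<notin> K \<longrightarrow> proj_keys K P = proj_keys K Q)"
  proof (induction rule: fwd.induct)
    case (act X a k)
    then show ?case by (auto simp: proj_keys_id erase_standard intro: fwd.act)
  next
    case (pre X th X' k a)
    then have "down_closed K (ord X')" by (auto intro: down_closed_antimono)
    moreover have "pkey th \<in> K \<Longrightarrow> k \<in> K"
      using pre.prems fwd_pkey_in_keys[OF pre.hyps(1)] unfolding down_closed_def by auto
    ultimately show ?case using pre erase_fwd[OF pre.hyps(1)] by (auto intro: fwd.pre)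
  next
    case (res X th X' l)
    then show ?case by (auto intro: fwd.res)
  next
    case (parL X th X' Y)
    then show ?case using keys_proj_keys_subset[of K Y]
      by (auto intro: fwd.parL down_closed_antimono)
  next
    case (parR X th X' Y)
    then show ?case using keys_proj_keys_subset[of K Y]
      by (auto intro: fwd.parR down_closed_antimono)
  next
    case (syn X th1 X' Y th2 Y' l)
    then show ?case by (auto intro: fwd.syn down_closed_antimono)
  next
    case (sumL X th X' Y)
    then show ?case using keys_proj_keys_subset[of K Y]
      by (auto intro: fwd.sumL down_closed_antimono)
  next
    case (sumR X th X' Y)
    then show ?case using keys_proj_keys_subset[of K Y]
      by (auto intro: fwd.sumR down_closed_antimono)
  qed
  then show "pkey th \<in> K \<Longrightarrow> fwd (proj_keys K P) th (proj_keys K Q)"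
    and "pkey th \<notin> K \<Longrightarrow> proj_keys K P = proj_keys K Q"
    by auto
qed

lemma fwd_source_eq_proj_keys:
  assumes "fwd P th Q"
  shows "down_closed (keys P) (ord Q)" and "proj_keys (keys P) Q = P"
proof -
  show dc: "down_closed (keys P) (ord Q)"
    unfolding down_closed_def
  proof (intro allI impI)
    fix a b assume "(a, b) \<in> ord Q" and "b \<in> keys P"
    then have "a \<in> keys Q" and "a \<noteq> pkey th"
      using ord_in_keys fwd_pkey_maximal[OF assms] by blast+
    then show "a \<in> keys P" using keys_fwd[OF assms] by simp
  qed
  have "proj_keys (keys P) Q = proj_keys (keys P) P"
    using fwd_proj_keys(2)[OF assms dc] fwd_pkey_notin_keys[OF assms] by simp
  then show "proj_keys (keys P) Q = P" by (simp add: proj_keys_id)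
qed

inductive fwd_reachable :: "'n proc \<Rightarrow> bool" where
  standard: "standard S \<Longrightarrow> fwd_reachable S"
| step: "fwd_reachable P \<Longrightarrow> fwd P th Q \<Longrightarrow> fwd_reachable Q"

lemma fwd_reachable_proj_keys:
  "fwd_reachable Q \<Longrightarrow> down_closed K (ord Q) \<Longrightarrow> fwd_reachable (proj_keys K Q)"
proof (induction rule: fwd_reachable.induct)
  case (standard S)
  then show ?case by (simp add: standard_def proj_keys_id fwd_reachable.standard)
next
  case (step P th Q)
  then have "fwd_reachable (proj_keys K P)"
    using down_closed_antimono ord_fwd_mono by blast
  then show ?case
    using fwd_proj_keys[OF step.hyps(2) step.prems]
    by (cases "pkey th \<in> K") (auto intro: fwd_reachable.step)
qed

lemma fwd_reachable_backward: "fwd_reachable Q \<Longrightarrow> fwd P th Q \<Longrightarrow> fwd_reachable P"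
  using fwd_reachable_proj_keys fwd_source_eq_proj_keys by metis

lemma standard_root: "standard P \<Longrightarrow> root P"
  unfolding root_def standard_def using fwd_pkey_in_keys by fastforce

lemma fwd_reachable_root_standard: "fwd_reachable P \<Longrightarrow> root P \<Longrightarrow> standard P"
  by (cases rule: fwd_reachable.cases) (auto simp: root_def)

section \<open>Swapping causally independent steps\<close>

inductive_cases fwd_to_KeyedE: "fwd P th (Keyed a k X)"
inductive_cases fwd_to_RestrE: "fwd P th (Restr X l)"
inductive_cases fwd_to_ChoiceE: "fwd P th (Choice X Y)"
inductive_cases fwd_to_ParE: "fwd P th (Par X Y)"

lemma fwd_to_Par_cases:
  assumes "fwd A w (Par X Y)"
  obtains (left) X1 w' where "A = Par X1 Y" "w = Pfx (OPar DL) w'" "fwd X1 w' X" "pkey w' \<notin> keys Y"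
  | (right) Y1 w' where "A = Par X Y1" "w = Pfx (OPar DR) w'" "fwd Y1 w' Y" "pkey w' \<notin> keys X"
  | (sync) X1 Y1 w1 w2 l where "A = Par X1 Y1" "w = Syn w1 w2" "fwd X1 w1 X" "fwd Y1 w2 Y"
      "plbl w1 = Vis l" "plbl w2 = Vis (cobar l)" "pkey w1 = pkey w2"
  using assms by (cases rule: fwd_to_ParE) auto

definition commutes_with_earlier :: "'n proc \<Rightarrow> 'n plab \<Rightarrow> 'n proc \<Rightarrow> bool" where
  "commutes_with_earlier P th Q \<longleftrightarrow> (\<forall>A w. fwd A w P \<longrightarrow> (pkey w, pkey th) \<notin> ord Q \<longrightarrow>
     (\<exists>P'. fwd A th P' \<and> fwd P' w Q \<and> indep th w))"

lemma commutes_with_earlier_parL: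
  assumes IH: "commutes_with_earlier X th X'" and f: "fwd X th X'" "pkey th \<notin> keys Y"
  shows "commutes_with_earlier (Par X Y) (Pfx (OPar DL) th) (Par X' Y)"
  unfolding commutes_with_earlier_def
proof (intro allI impI)
  fix A w assume w: "fwd A w (Par X Y)" "(pkey w, pkey (Pfx (OPar DL) th)) \<notin> ord (Par X' Y)"
  from w(1) show "\<exists>P'. fwd A (Pfx (OPar DL) th) P' \<and> fwd P' w (Par X' Y)
      \<and> indep (Pfx (OPar DL) th) w"
  proof (cases rule: fwd_to_Par_cases)
    case (left X1 w')
    then obtain P' where "fwd X1 th P'" "fwd P' w' X'" "indep th w'"
      using IH w(2) by (auto simp: commutes_with_earlier_def)
    then show ?thesis using left f by (auto intro: fwd.parL indep.P1)
  next
    case (right Y1 w')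
    have "pkey w' \<in> keys Y" "keys Y1 \<subseteq> keys Y" using right(3) by (auto simp: keys_fwd)
    then have "fwd A (Pfx (OPar DL) th) (Par X' Y1)" "fwd (Par X' Y1) w (Par X' Y)"
      "indep (Pfx (OPar DL) th) w"
      using right f indep.P2[of th w' DL] by (auto simp: keys_fwd intro: fwd.parL fwd.parR)
    then show ?thesis by blast
  next
    case (sync X1 Y1 w1 w2 l)
    moreover obtain P' where "fwd X1 th P'" "fwd P' w1 X'" "indep th w1"
      using IH w(2) sync(2,3) by (auto simp: commutes_with_earlier_def)
    moreover have "keys Y1 \<subseteq> keys Y" using sync(4) by (auto simp: keys_fwd)
    ultimately show ?thesis using f indep.S1[of th DL w1 w2]
      by (auto intro!: exI[of _ "Par P' Y1"] intro: fwd.parL fwd.syn)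
  qed
qed

lemma commutes_with_earlier_parR:
  assumes IH: "commutes_with_earlier X th X'" and f: "fwd X th X'" "pkey th \<notin> keys Y"
  shows "commutes_with_earlier (Par Y X) (Pfx (OPar DR) th) (Par Y X')"
  unfolding commutes_with_earlier_def
proof (intro allI impI)
  fix A w assume w: "fwd A w (Par Y X)" "(pkey w, pkey (Pfx (OPar DR) th)) \<notin> ord (Par Y X')"
  from w(1) show "\<exists>P'. fwd A (Pfx (OPar DR) th) P' \<and> fwd P' w (Par Y X')
      \<and> indep (Pfx (OPar DR) th) w"
  proof (cases rule: fwd_to_Par_cases)
    case (left Y1 w')
    have "pkey w' \<in> keys Y" "keys Y1 \<subseteq> keys Y" using left(3) by (auto simp: keys_fwd)
    then have "fwd A (Pfx (OPar DR) th) (Par Y1 X')" "fwd (Par Y1 X') w (Par Y X')"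
      "indep (Pfx (OPar DR) th) w"
      using left f indep.P2[of th w' DR] by (auto simp: keys_fwd intro: fwd.parL fwd.parR)
    then show ?thesis by blast
  next
    case (right X1 w')
    then obtain P' where "fwd X1 th P'" "fwd P' w' X'" "indep th w'"
      using IH w(2) by (auto simp: commutes_with_earlier_def)
    then show ?thesis using right f by (auto intro: fwd.parR indep.P1)
  next
    case (sync Y1 X1 w1 w2 l)
    moreover obtain P' where "fwd X1 th P'" "fwd P' w2 X'" "indep th w2"
      using IH w(2) sync(2,4,7) by (auto simp: commutes_with_earlier_def)
    moreover have "keys Y1 \<subseteq> keys Y" using sync(3) by (auto simp: keys_fwd)
    ultimately show ?thesis using f indep.S1[of th DR w1 w2]
      by (auto intro!: exI[of _ "Par Y1 P'"] intro: fwd.parR fwd.syn)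
  qed
qed

lemma commutes_with_earlier_syn:
  assumes IH: "commutes_with_earlier X th1 X'" "commutes_with_earlier Y th2 Y'"
    and f: "fwd X th1 X'" "fwd Y th2 Y'" "plbl th1 = Vis l" "plbl th2 = Vis (cobar l)"
      "pkey th1 = pkey th2"
  shows "commutes_with_earlier (Par X Y) (Syn th1 th2) (Par X' Y')"
  unfolding commutes_with_earlier_def
proof (intro allI impI)
  fix A w assume w: "fwd A w (Par X Y)" "(pkey w, pkey (Syn th1 th2)) \<notin> ord (Par X' Y')"
  have th1: "pkey th1 \<notin> keys X" and th2: "pkey th2 \<notin> keys Y"
    using f(1,2) by (auto dest: fwd_pkey_notin_keys)
  from w(1) show "\<exists>P'. fwd A (Syn th1 th2) P' \<and> fwd P' w (Par X' Y') \<and> indep (Syn th1 th2) w"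
  proof (cases rule: fwd_to_Par_cases)
    case (left X1 w')
    moreover obtain P' where "fwd X1 th1 P'" "fwd P' w' X'" "indep th1 w'"
      using IH(1) w(2) left by (auto simp: commutes_with_earlier_def)
    moreover have "pkey w' \<in> keys X" using left(3) by (rule fwd_pkey_in_keys)
    ultimately show ?thesis using f th1 indep.S2[of DL th1 th2 w']
      by (auto simp: keys_fwd intro!: exI[of _ "Par P' Y'"] intro: fwd.parL fwd.syn)
  next
    case (right Y1 w')
    moreover obtain P' where "fwd Y1 th2 P'" "fwd P' w' Y'" "indep th2 w'"
      using IH(2) w(2) right f(5) by (auto simp: commutes_with_earlier_def)
    moreover have "pkey w' \<in> keys Y" using right(3) by (rule fwd_pkey_in_keys)
    ultimately show ?thesis using f th2 indep.S2[of DR th1 th2 w']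
      by (auto simp: keys_fwd intro!: exI[of _ "Par X' P'"] intro: fwd.parR fwd.syn)
  next
    case (sync X1 Y1 w1 w2 l')
    moreover have "(pkey w1, pkey th1) \<notin> ord X'" "(pkey w2, pkey th2) \<notin> ord Y'"
      using w(2) f(5) sync(2,7) by simp_all
    moreover obtain P1 where "fwd X1 th1 P1" "fwd P1 w1 X'" "indep th1 w1"
      using IH(1) sync(3) calculation unfolding commutes_with_earlier_def by blast
    moreover obtain P2 where "fwd Y1 th2 P2" "fwd P2 w2 Y'" "indep th2 w2"
      using IH(2) sync(4) calculation unfolding commutes_with_earlier_def by blast
    ultimately show ?thesis using f indep.S3[of th1 w1 th2 w2]
      by (auto intro!: exI[of _ "Par P1 P2"] intro: fwd.syn)
  qed
qed

lemma commutes_with_earlier_act: "commutes_with_earlier (Pref a X) th Q"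
  unfolding commutes_with_earlier_def by (blast elim: fwd.cases)

lemma commutes_with_earlier_pre:
  assumes IH: "commutes_with_earlier X th X'" and f: "fwd X th X'" "pkey th \<noteq> k"
  shows "commutes_with_earlier (Keyed a k X) th (Keyed a k X')"
  unfolding commutes_with_earlier_def
proof (intro allI impI)
  fix A w assume w: "fwd A w (Keyed a k X)" "(pkey w, pkey th) \<notin> ord (Keyed a k X')"
  with fwd_pkey_in_keys[OF f(1)] obtain X1 where "A = Keyed a k X1" "fwd X1 w X" "pkey w \<noteq> k"
    by (cases rule: fwd_to_KeyedE) auto
  moreover obtain P' where "fwd X1 th P'" "fwd P' w X'" "indep th w"
    using IH calculation w(2) by (auto simp: commutes_with_earlier_def)
  ultimately show "\<exists>P'. fwd A th P' \<and> fwd P' w (Keyed a k X') \<and> indep th w"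
    using f by (auto intro: fwd.pre)
qed

lemma commutes_with_earlier_res:
  assumes IH: "commutes_with_earlier X th X'" and f: "plbl th \<noteq> Vis l" "plbl th \<noteq> Vis (cobar l)"
  shows "commutes_with_earlier (Restr X l) th (Restr X' l)"
  unfolding commutes_with_earlier_def
proof (intro allI impI)
  fix A w assume w: "fwd A w (Restr X l)" "(pkey w, pkey th) \<notin> ord (Restr X' l)"
  then obtain X1 where "A = Restr X1 l" "fwd X1 w X" "plbl w \<noteq> Vis l" "plbl w \<noteq> Vis (cobar l)"
    by (cases rule: fwd_to_RestrE) auto
  moreover obtain P' where "fwd X1 th P'" "fwd P' w X'" "indep th w"
    using IH calculation w(2) by (auto simp: commutes_with_earlier_def)
  ultimately show "\<exists>P'. fwd A th P' \<and> fwd P' w (Restr X' l) \<and> indep th w"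
    using f by (auto intro: fwd.res)
qed

lemma commutes_with_earlier_sumL:
  assumes IH: "commutes_with_earlier X th X'" and f: "fwd X th X'" "keys Y = {}"
  shows "commutes_with_earlier (Choice X Y) (Pfx (OSum DL) th) (Choice X' Y)"
  unfolding commutes_with_earlier_def
proof (intro allI impI)
  fix A w assume w: "fwd A w (Choice X Y)" "(pkey w, pkey (Pfx (OSum DL) th)) \<notin> ord (Choice X' Y)"
  with f obtain X1 w' where "A = Choice X1 Y" "fwd X1 w' X" "w = Pfx (OSum DL) w'"
    by (cases rule: fwd_to_ChoiceE) (auto dest: fwd_pkey_in_keys)
  moreover obtain P' where "fwd X1 th P'" "fwd P' w' X'" "indep th w'"
    using IH calculation w(2) by (auto simp: commutes_with_earlier_def)
  ultimately show "\<exists>P'. fwd A (Pfx (OSum DL) th) P' \<and> fwd P' w (Choice X' Y)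
      \<and> indep (Pfx (OSum DL) th) w"
    using f by (auto intro: fwd.sumL indep.C1)
qed

lemma commutes_with_earlier_sumR:
  assumes IH: "commutes_with_earlier X th X'" and f: "fwd X th X'" "keys Y = {}"
  shows "commutes_with_earlier (Choice Y X) (Pfx (OSum DR) th) (Choice Y X')"
  unfolding commutes_with_earlier_def
proof (intro allI impI)
  fix A w assume w: "fwd A w (Choice Y X)" "(pkey w, pkey (Pfx (OSum DR) th)) \<notin> ord (Choice Y X')"
  with f obtain X1 w' where "A = Choice Y X1" "fwd X1 w' X" "w = Pfx (OSum DR) w'"
    by (cases rule: fwd_to_ChoiceE) (auto dest: fwd_pkey_in_keys)
  moreover obtain P' where "fwd X1 th P'" "fwd P' w' X'" "indep th w'"
    using IH calculation w(2) by (auto simp: commutes_with_earlier_def)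
  ultimately show "\<exists>P'. fwd A (Pfx (OSum DR) th) P' \<and> fwd P' w (Choice Y X')
      \<and> indep (Pfx (OSum DR) th) w"
    using f by (auto intro: fwd.sumR indep.C1)
qed

lemma fwd_commutes_with_earlier: "fwd P th Q \<Longrightarrow> commutes_with_earlier P th Q"
  by (induction rule: fwd.induct)
    (auto intro: commutes_with_earlier_act commutes_with_earlier_pre commutes_with_earlier_res
      commutes_with_earlier_parL commutes_with_earlier_parR commutes_with_earlier_syn
      commutes_with_earlier_sumL commutes_with_earlier_sumR)

lemma fwd_swap:
  "fwd P th Q \<Longrightarrow> fwd A w P \<Longrightarrow> (pkey w, pkey th) \<notin> ord Q \<Longrightarrow>
   \<exists>P'. fwd A th P' \<and> fwd P' w Q \<and> indep th w"
  using fwd_commutes_with_earlier unfolding commutes_with_earlier_def by blast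

definition down_set :: "key \<Rightarrow> 'n proc \<Rightarrow> key set" where
  "down_set k Q = {x. (x, k) \<in> (ord Q)\<^sup>*}"

lemma in_down_set_self [simp]: "k \<in> down_set k Q"
  by (simp add: down_set_def)

lemma down_closed_down_set: "down_closed (down_set k Q) (ord Q)"
  unfolding down_closed_def down_set_def by (auto intro: converse_rtrancl_into_rtrancl)

lemma down_set_has_successor: "x \<in> down_set k Q \<Longrightarrow> x \<noteq> k \<Longrightarrow> \<exists>z. (x, z) \<in> ord Q"
  unfolding down_set_def by (auto elim: converse_rtranclE)

lemma down_set_subset_keys: "k \<in> keys Q \<Longrightarrow> down_set k Q \<subseteq> keys Q"
  using down_set_has_successor ord_in_keys by blast

lemma down_set_mono: "(k1, k2) \<in> (ord Q)\<^sup>* \<Longrightarrow> down_set k1 Q \<subseteq> down_set k2 Q"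
  unfolding down_set_def by auto

lemma fwd_pkey_notin_down_set:
  "fwd S th Q \<Longrightarrow> k \<noteq> pkey th \<Longrightarrow> pkey th \<notin> down_set k Q"
  using down_set_has_successor fwd_pkey_maximal by metis

lemma down_set_fwd:
  assumes f: "fwd S th Q" and k: "k \<noteq> pkey th"
  shows "down_set k Q = down_set k S"
proof
  show "down_set k S \<subseteq> down_set k Q"
    unfolding down_set_def using rtrancl_mono[OF ord_fwd_mono[OF f]] by auto
next
  show "down_set k Q \<subseteq> down_set k S"
  proof
    fix x assume "x \<in> down_set k Q"
    then have "(x, k) \<in> (ord Q)\<^sup>*" by (simp add: down_set_def)
    then have "(x, k) \<in> (ord S)\<^sup>*"
    proof (induction rule: converse_rtrancl_induct)
      case (step y z)
      then have "z \<noteq> pkey th"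
        using fwd_pkey_notin_down_set[OF f k] by (auto simp: down_set_def)
      then have "(y, z) \<in> ord S" using step.hyps(1) ord_fwd_subset[OF f] by auto
      then show ?case using step.IH by (rule converse_rtrancl_into_rtrancl)
    qed simp
    then show "x \<in> down_set k S" by (simp add: down_set_def)
  qed
qed

lemma down_set_proj_keys:
  assumes "down_closed K (ord X)" and "k \<in> K"
  shows "down_set k (proj_keys K X) = down_set k X"
proof -
  have "(x, k) \<in> (ord X)\<^sup>* \<longleftrightarrow> (x, k) \<in> (ord X \<inter> K \<times> K)\<^sup>*" for x
  proof
    assume "(x, k) \<in> (ord X)\<^sup>*"
    then show "(x, k) \<in> (ord X \<inter> K \<times> K)\<^sup>*"
    proof (induction rule: converse_rtrancl_induct)
      case (step y z)
      then have "z \<in> K" using down_closed_rtrancl[OF assms(1) _ assms(2)] by blast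
      then have "y \<in> K" using assms(1) step.hyps(1) by (auto simp: down_closed_def)
      then show ?case using step \<open>z \<in> K\<close> by (blast intro: converse_rtrancl_into_rtrancl)
    qed simp
  qed (use rtrancl_mono[of "ord X \<inter> K \<times> K" "ord X"] in auto)
  then show ?thesis
    unfolding down_set_def ord_proj_keys[OF assms(1)] by simp
qed

text \<open>A step with a key outside K can be swapped past all later steps with keys in K.\<close>

lemma fwd_reachable_last_step_outside:
  "fwd_reachable P \<Longrightarrow> down_closed K (ord P) \<Longrightarrow> \<not> keys P \<subseteq> K \<Longrightarrow>
   \<exists>A w. fwd_reachable A \<and> fwd A w P \<and> pkey w \<notin> K"
proof (induction rule: fwd_reachable.induct)
  case (standard S)
  then show ?case by (simp add: standard_def)
next
  case (step P0 th P)
  show ?case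
  proof (cases "pkey th \<in> K")
    case True
    have "down_closed K (ord P0)" "\<not> keys P0 \<subseteq> K"
      using step ord_fwd_mono[OF step.hyps(2)] keys_fwd[OF step.hyps(2)] True
      by (auto intro: down_closed_antimono)
    then obtain A w where A: "fwd_reachable A" "fwd A w P0" "pkey w \<notin> K"
      using step.IH by blast
    have "(pkey w, pkey th) \<notin> ord P"
      using step.prems(1) True A(3) by (auto simp: down_closed_def)
    then obtain A' where "fwd A th A'" "fwd A' w P"
      using fwd_swap[OF step.hyps(2) A(2)] by blast
    then show ?thesis using A by (blast intro: fwd_reachable.step)
  qed (use step.hyps in blast)
qed

lemma trans_simps [simp]:
  "src (P, th, d, Q) = P" "tlab (P, th, d, Q) = th" "isfwd (P, th, d, Q) = d"
  "tgt (P, th, d, Q) = Q"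
  by (simp_all add: src_def tlab_def isfwd_def tgt_def)

lemma is_trans_simps [simp]:
  "is_trans (P, th, True, Q) \<longleftrightarrow> fwd P th Q" "is_trans (P, th, False, Q) \<longleftrightarrow> fwd Q th P"
  by (simp_all add: is_trans_def)

lemma tinv_simps [simp]:
  "src (tinv t) = tgt t" "tlab (tinv t) = tlab t" "isfwd (tinv t) = (\<not> isfwd t)"
  "tgt (tinv t) = src t"
  by (simp_all add: tinv_def)

lemma tinv_tinv [simp]: "tinv (tinv t) = t"
  by (simp add: tinv_def src_def tlab_def isfwd_def tgt_def)

lemma is_trans_tinv [simp]: "is_trans (tinv t) \<longleftrightarrow> is_trans t"
  by (simp add: is_trans_def)

lemma fwd_reachable_trans: "is_trans t \<Longrightarrow> fwd_reachable (src t) \<longleftrightarrow> fwd_reachable (tgt t)"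
  unfolding is_trans_def
  by (cases "isfwd t") (auto intro: fwd_reachable.step fwd_reachable_backward)

lemma fwd_reachable_path:
  "path P r Q \<Longrightarrow>
    (fwd_reachable Q \<longleftrightarrow> fwd_reachable P) \<and> (\<forall>s \<in> set r. fwd_reachable (src s) \<longleftrightarrow> fwd_reachable P)"
proof (induction rule: path.induct)
  case (path_cons t P r Q)
  then show ?case using fwd_reachable_trans[OF path_cons.hyps(1)] by auto
qed simp

lemma path_single: "is_trans t \<Longrightarrow> path (src t) [t] (tgt t)"
  by (auto intro: path.intros)

lemma path_snoc: "path P r Q \<Longrightarrow> is_trans t \<Longrightarrow> src t = Q \<Longrightarrow> path P (r @ [t]) (tgt t)"
  by (induction rule: path.induct) (auto intro: path.intros)

lemma fwd_reachable_iff_path: "fwd_reachable Q \<longleftrightarrow> (\<exists>S r. standard S \<and> path S r Q)"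
proof
  show "fwd_reachable Q \<Longrightarrow> \<exists>S r. standard S \<and> path S r Q"
  proof (induction rule: fwd_reachable.induct)
    case (step P th Q)
    then show ?case using path_snoc[of _ _ P "(P, th, True, Q)"] by fastforce
  qed (auto intro: path.path_nil)
qed (auto dest: fwd_reachable_path intro: fwd_reachable.standard)

lemma sim_fwd_square:
  assumes "fwd A w P" "fwd P th Q" "fwd A th S" "fwd S w Q" "indep th w"
  shows "sim (P, th, True, Q) (A, th, True, S)"
proof (rule sim_diamond[OF refl refl refl refl])
  have "path P [(P, w, False, A)] A" using path_single[of "(P, w, False, A)"] assms(1) by simp
  then show "tindep (P, th, True, Q) (P, w, False, A)"
    using assms(5) unfolding tindep_def connected_def by auto
qed (use assms in simp_all)

text \<open>Induction on the number of actions outside the causal past of the key: the last of them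
  commutes with the transition, and the resulting square is a diamond.\<close>

lemma sim_proj_down_set:
  assumes "fwd_reachable P" and "fwd P th Q"
  shows "sim (P, th, True, Q) (proj_keys (down_set (pkey th) Q) P, th, True,
                                proj_keys (down_set (pkey th) Q) Q)"
  using assms
proof (induction "card (keys P - down_set (pkey th) Q)" arbitrary: P Q rule: less_induct)
  case less
  let ?K = "down_set (pkey th) Q"
  have dcP: "down_closed ?K (ord P)"
    using down_closed_antimono[OF down_closed_down_set ord_fwd_mono[OF less.prems(2)]] .
  show ?case
  proof (cases "keys P \<subseteq> ?K")
    case True
    then show ?thesis
      using less.prems(2) by (simp add: proj_keys_id keys_fwd sim_refl)
  next
    case False
    then obtain A w where A: "fwd_reachable A" "fwd A w P" "pkey w \<notin> ?K"
      using fwd_reachable_last_step_outside[OF less.prems(1) dcP] by blast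
    then have "(pkey w, pkey th) \<notin> ord Q" by (auto simp: down_set_def)
    then obtain S where S: "fwd A th S" "fwd S w Q" "indep th w"
      using fwd_swap[OF less.prems(2) A(2)] by blast
    have w_th: "pkey th \<noteq> pkey w" using A(3) by auto
    have K: "down_set (pkey th) S = ?K" using down_set_fwd[OF S(2) w_th] by simp
    have "keys P - ?K = insert (pkey w) (keys A - ?K)"
      using keys_fwd[OF A(2)] A(3) by auto
    then have "card (keys A - ?K) < card (keys P - ?K)"
      using fwd_pkey_notin_keys[OF A(2)] finite_keys[of A] by simp
    then have "sim (A, th, True, S) (proj_keys ?K A, th, True, proj_keys ?K S)"
      using less.hyps[OF _ A(1) S(1)] K by simp
    moreover have "proj_keys ?K A = proj_keys ?K P"
      using fwd_proj_keys(2)[OF A(2) dcP] A(3) by simp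
    moreover have "proj_keys ?K S = proj_keys ?K Q"
      using fwd_proj_keys(2)[OF S(2) down_closed_down_set] fwd_pkey_notin_down_set[OF S(2) w_th]
      by simp
    ultimately show ?thesis
      using sim_trans[OF sim_fwd_square[OF A(2) less.prems(2) S]] by simp
  qed
qed

lemma sim_is_trans: "sim t t' \<Longrightarrow> is_trans t \<and> is_trans t'"
  by (induction rule: sim.induct) auto

lemma sim_fwd_reachable: "sim t t' \<Longrightarrow> fwd_reachable (src t) \<longleftrightarrow> fwd_reachable (src t')"
proof (induction rule: sim.induct)
  case (sim_diamond t P tht dt Q u thu du R u' S t')
  then show ?case using fwd_reachable_trans[of u] by simp
qed auto

lemma sim_tinv: "sim t t' \<Longrightarrow> sim (tinv t) (tinv t')"
proof (induction rule: sim.induct)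
  case (sim_diamond t P tht dt Q u thu du R u' S t')
  have inv: "tinv t = (Q, tht, \<not> dt, P)" "tinv t' = (S, tht, \<not> dt, R)"
    using sim_diamond.hyps(1,4) by (simp_all add: tinv_def)
  have "path Q [u'] S" using path_single[of u'] sim_diamond.hyps(3,7) by simp
  then have "tindep (tinv t) u'"
    using sim_diamond.hyps(1-3,9) inv unfolding tindep_def connected_def by auto
  then show ?case
    using sim.sim_diamond[OF inv(1) sim_diamond.hyps(3,2) inv(2)] sim_diamond.hyps(5-8) by simp
qed (auto intro: sim.intros)

lemma mem_cls_self: "is_trans t \<Longrightarrow> t \<in> cls t"
  by (simp add: cls_def sim_refl)

lemma mem_ebar_cls:
  assumes "is_trans t0"
  shows "t \<in> ebar (cls t0) \<longleftrightarrow> sim t0 (tinv t)"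
proof -
  define t1 where "t1 = (SOME t. t \<in> cls t0)"
  have t1: "sim t0 t1"
    using someI[of "\<lambda>t. t \<in> cls t0", OF mem_cls_self[OF assms]] by (simp add: t1_def cls_def)
  have "t \<in> ebar (cls t0) \<longleftrightarrow> sim (tinv t1) t"
    by (simp add: ebar_def cls_def t1_def)
  also have "\<dots> \<longleftrightarrow> sim t1 (tinv t)"
    using sim_tinv[of "tinv t1" t] sim_tinv[of t1 "tinv t"] by auto
  also have "\<dots> \<longleftrightarrow> sim t0 (tinv t)"
    using t1 by (blast intro: sim_trans sim_sym)
  finally show ?thesis .
qed

definition pre_state :: "'n trans \<Rightarrow> 'n proc" where
  "pre_state t = (if isfwd t then src t else tgt t)"

definition post_state :: "'n trans \<Rightarrow> 'n proc" where
  "post_state t = (if isfwd t then tgt t else src t)"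

definition trans_signature :: "'n trans \<Rightarrow> 'n plab \<times> bool \<times> key set \<times> 'n proc" where
  "trans_signature t =
    (let K = down_set (pkey (tlab t)) (post_state t)
     in (tlab t, isfwd t, K, proj_keys K (pre_state t)))"

lemma trans_signature_fwd [simp]:
  "trans_signature (P, th, True, Q) =
    (th, True, down_set (pkey th) Q, proj_keys (down_set (pkey th) Q) P)"
  by (simp add: trans_signature_def pre_state_def post_state_def Let_def)

lemma fwd_square_down_set:
  assumes "fwd A u B" "fwd B th C" "fwd A th D" "fwd D u C"
  shows "down_set (pkey th) C = down_set (pkey th) D"
    and "proj_keys (down_set (pkey th) C) B = proj_keys (down_set (pkey th) D) A"
proof -
  have ne: "pkey th \<noteq> pkey u"
    using fwd_pkey_in_keys[OF assms(1)] fwd_pkey_notin_keys[OF assms(2)] by auto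
  show eq: "down_set (pkey th) C = down_set (pkey th) D"
    using down_set_fwd[OF assms(4) ne] .
  have "down_closed (down_set (pkey th) C) (ord B)"
    using down_closed_antimono[OF down_closed_down_set ord_fwd_mono[OF assms(2)]] .
  then show "proj_keys (down_set (pkey th) C) B = proj_keys (down_set (pkey th) D) A"
    using fwd_proj_keys(2)[OF assms(1)] fwd_pkey_notin_down_set[OF assms(4) ne] eq by simp
qed

lemma sim_trans_signature: "sim t t' \<Longrightarrow> trans_signature t = trans_signature t'"
proof (induction rule: sim.induct)
  case (sim_diamond t P tht dt Q u thu du R u' S t')
  then have "is_trans (P, tht, dt, Q)" "is_trans (P, thu, du, R)"
    "is_trans (Q, thu, du, S)" "is_trans (R, tht, dt, S)" by simp_all
  then show ?case
    using sim_diamond.hyps(1,4)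
    by (cases dt; cases du)
      (auto simp: trans_signature_def pre_state_def post_state_def Let_def
        dest: fwd_square_down_set)
qed auto

lemma key_ev_cls:
  assumes "is_trans t"
  shows "key_ev (cls t) = pkey (tlab t)"
proof -
  have "sim t (SOME s. s \<in> cls t)"
    using someI[of "\<lambda>s. s \<in> cls t", OF mem_cls_self[OF assms]] by (simp add: cls_def)
  then show ?thesis
    by (auto simp: key_ev_def trans_signature_def Let_def dest: sim_trans_signature)
qed

lemma sim_isfwd: "sim t t' \<Longrightarrow> isfwd t' = isfwd t"
  by (drule sim_trans_signature) (simp add: trans_signature_def Let_def)

section \<open>Occurrence of an event\<close>

text \<open>The event that added key k to Q has occurred in Z: Z contains the causal past of k in Q
  as a down-closed part, with the same keyed actions.\<close>

definition occurred :: "key \<Rightarrow> 'n proc \<Rightarrow> 'n proc \<Rightarrow> bool" where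
  "occurred k Q Z \<longleftrightarrow> down_set k Q \<subseteq> keys Z \<and> down_closed (down_set k Q) (ord Z)
     \<and> proj_keys (down_set k Q) Z = proj_keys (down_set k Q) Q"

lemma occurred_key_in_keys: "occurred k Q Z \<Longrightarrow> k \<in> keys Z"
  unfolding occurred_def by auto

lemma not_occurred_standard: "standard Z \<Longrightarrow> \<not> occurred k Q Z"
  unfolding occurred_def standard_def using in_down_set_self by blast

lemma occurred_down_set: "occurred k Q Z \<Longrightarrow> down_set k Z = down_set k Q"
  unfolding occurred_def
  by (metis down_closed_down_set down_set_proj_keys in_down_set_self)

lemma occurred_rebase:
  assumes "occurred k Q X"
  shows "occurred k Q Z \<longleftrightarrow> occurred k X Z"
  using assms occurred_down_set[OF assms] by (simp add: occurred_def)

lemma occurred_fwd_outside: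
  assumes f: "fwd X th Y" and out: "pkey th \<notin> down_set k Q"
  shows "occurred k Q X \<longleftrightarrow> occurred k Q Y"
proof -
  let ?K = "down_set k Q"
  have "down_closed ?K (ord X) \<longleftrightarrow> down_closed ?K (ord Y)"
    using ord_fwd_subset[OF f] ord_fwd_mono[OF f] out
    unfolding down_closed_def by blast
  moreover have "down_closed ?K (ord Y) \<Longrightarrow> proj_keys ?K X = proj_keys ?K Y"
    using fwd_proj_keys(2)[OF f] out by blast
  ultimately show ?thesis
    using keys_fwd[OF f] out unfolding occurred_def by auto
qed

lemma sim_fwd_occurred:
  assumes f0: "fwd P0 th Q0" and f: "fwd X th' Y"
    and s: "sim (P0, th, True, Q0) (X, th', True, Y)"
  shows "\<not> occurred (pkey th) Q0 X" and "occurred (pkey th) Q0 Y"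
proof -
  let ?k = "pkey th"
  let ?K = "down_set ?k Q0"
  have th': "th' = th" and K: "down_set ?k Y = ?K" and proj: "proj_keys ?K X = proj_keys ?K P0"
    using sim_trans_signature[OF s] by auto
  show "\<not> occurred ?k Q0 X"
    using fwd_pkey_notin_keys[OF f] th' occurred_key_in_keys by blast
  have dcY: "down_closed ?K (ord Y)" using down_closed_down_set[of ?k Y] K by simp
  have "fwd (proj_keys ?K X) th (proj_keys ?K Y)" "fwd (proj_keys ?K P0) th (proj_keys ?K Q0)"
    using fwd_proj_keys(1)[OF f dcY] fwd_proj_keys(1)[OF f0 down_closed_down_set] th' by simp_all
  then have "proj_keys ?K Y = proj_keys ?K Q0"
    using proj fwd_deterministic by metis
  moreover have "?K \<subseteq> keys Y"
    using down_set_subset_keys[OF fwd_pkey_in_keys[OF f]] K th' by simp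
  ultimately show "occurred ?k Q0 Y"
    using dcY unfolding occurred_def by simp
qed

lemma occurred_change_sim:
  assumes "fwd_reachable X" "fwd_reachable P0" and f0: "fwd P0 th Q0" and f: "fwd X th' Y"
    and change: "occurred (pkey th) Q0 X \<noteq> occurred (pkey th) Q0 Y"
  shows "sim (P0, th, True, Q0) (X, th', True, Y)"
proof -
  let ?k = "pkey th"
  let ?K = "down_set ?k Q0"
  have inK: "pkey th' \<in> ?K" using occurred_fwd_outside[OF f] change by blast
  then have "\<not> occurred ?k Q0 X"
    using fwd_pkey_notin_keys[OF f] unfolding occurred_def by blast
  then have occY: "occurred ?k Q0 Y" using change by simp
  then have dcY: "down_closed ?K (ord Y)" and projY: "proj_keys ?K Y = proj_keys ?K Q0"
    and KY: "down_set ?k Y = ?K"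
    using occurred_down_set by (auto simp: occurred_def)
  have f1: "fwd (proj_keys ?K X) th' (proj_keys ?K Q0)"
    using fwd_proj_keys(1)[OF f dcY inK] projY by simp
  have f2: "fwd (proj_keys ?K P0) th (proj_keys ?K Q0)"
    using fwd_proj_keys(1)[OF f0 down_closed_down_set] by simp
  have "pkey th' = ?k"
  proof (rule ccontr)
    assume "pkey th' \<noteq> ?k"
    moreover have "pkey th' \<in> down_set ?k (proj_keys ?K Q0)"
      using inK down_set_proj_keys[OF down_closed_down_set[of ?k Q0] in_down_set_self] by simp
    ultimately obtain z where "(pkey th', z) \<in> ord (proj_keys ?K Q0)"
      using down_set_has_successor by blast
    then show False using fwd_pkey_maximal[OF f1] by blast
  qed
  then have th': "th' = th" and proj: "proj_keys ?K X = proj_keys ?K P0"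
    using fwd_backward_deterministic[OF f1 f2] by auto
  have "sim (X, th, True, Y) (proj_keys ?K P0, th, True, proj_keys ?K Q0)"
    using sim_proj_down_set[OF assms(1) f] th' KY proj projY by simp
  then show ?thesis
    using sim_trans[OF sim_proj_down_set[OF assms(2) f0] sim_sym] th' by simp
qed

lemma occurred_fwd_step:
  assumes "fwd_reachable X" "fwd_reachable P0" "fwd P0 th Q0" "fwd X th' Y"
  shows "sim (P0, th, True, Q0) (X, th', True, Y) \<longleftrightarrow>
      \<not> occurred (pkey th) Q0 X \<and> occurred (pkey th) Q0 Y"
    and "occurred (pkey th) Q0 X \<Longrightarrow> occurred (pkey th) Q0 Y"
  using sim_fwd_occurred[OF assms(3,4)] occurred_change_sim[OF assms] by blast+

lemma sharp_eq_0: "(\<forall>s \<in> set r. s \<notin> e \<and> s \<notin> ebar e) \<Longrightarrow> sharp r e = 0"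
  by (induction r) auto

lemma fwd_reachable_event_member:
  assumes "is_trans t0" and "s \<in> cls t0 \<or> s \<in> ebar (cls t0)"
  shows "fwd_reachable (src s) \<longleftrightarrow> fwd_reachable (src t0)"
  using assms(2)
proof
  assume "s \<in> cls t0"
  then show ?thesis using sim_fwd_reachable by (fastforce simp: cls_def)
next
  assume "s \<in> ebar (cls t0)"
  then have s: "sim t0 (tinv s)" using mem_ebar_cls[OF assms(1)] by simp
  then show ?thesis
    using sim_fwd_reachable[OF s] fwd_reachable_trans[of s] sim_is_trans[OF s] by simp
qed

lemma sharp_singleton:
  assumes fr0: "fwd_reachable P0" and f0: "fwd P0 th Q0"
    and t: "is_trans t" and fr: "fwd_reachable (src t)"
  shows "sharp [t] (cls (P0, th, True, Q0))
    = of_bool (occurred (pkey th) Q0 (tgt t)) - of_bool (occurred (pkey th) Q0 (src t))"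
proof -
  let ?t0 = "(P0, th, True, Q0)"
  obtain X th' d Y where tq: "t = (X, th', d, Y)" by (cases t)
  have ebar: "t \<in> ebar (cls ?t0) \<longleftrightarrow> sim ?t0 (tinv t)"
    using mem_ebar_cls[of ?t0] f0 by simp
  show ?thesis
  proof (cases d)
    case True
    then have "\<not> sim ?t0 (tinv t)" using sim_isfwd[of ?t0 "tinv t"] tq by auto
    then show ?thesis
      using occurred_fwd_step[OF _ fr0 f0, of X th' Y] t fr tq True ebar
      by (auto simp: cls_def)
  next
    case False
    then have "\<not> sim ?t0 t" using sim_isfwd[of ?t0 t] tq by auto
    moreover have "tinv t = (Y, th', True, X)" using tq False by (simp add: tinv_def)
    ultimately show ?thesis
      using occurred_fwd_step[OF _ fr0 f0, of Y th' X] t fr tq False ebar fwd_reachable_trans[OF t]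
      by (auto simp: cls_def)
  qed
qed

lemma sharp_path:
  assumes "fwd_reachable P0" "fwd P0 th Q0"
  shows "path P r Q \<Longrightarrow> fwd_reachable P \<Longrightarrow>
    sharp r (cls (P0, th, True, Q0))
      = of_bool (occurred (pkey th) Q0 Q) - of_bool (occurred (pkey th) Q0 P)"
proof (induction rule: path.induct)
  case (path_cons t P r Q)
  then have "fwd_reachable (tgt t)" using fwd_reachable_trans by blast
  then show ?case
    using path_cons sharp_singleton[OF assms path_cons.hyps(1)] by simp
qed simp

lemma sharp_rooted_pos_iff:
  assumes "fwd_reachable P0" "fwd P0 th Q0" and "root P" "path P r Q"
  shows "0 < sharp r (cls (P0, th, True, Q0)) \<longleftrightarrow> fwd_reachable P \<and> occurred (pkey th) Q0 Q"
proof (cases "fwd_reachable P")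
  case True
  then have "\<not> occurred (pkey th) Q0 P"
    using not_occurred_standard fwd_reachable_root_standard assms(3) by blast
  then show ?thesis using sharp_path[OF assms(1,2,4) True] True by simp
next
  case False
  let ?e = "cls (P0, th, True, Q0)"
  have "\<not> (s \<in> ?e \<or> s \<in> ebar ?e)" if "s \<in> set r" for s
    using fwd_reachable_event_member[of "(P0, th, True, Q0)" s] fwd_reachable_path[OF assms(4)]
      that False assms(1,2) by auto
  then show ?thesis using sharp_eq_0[of r ?e] False by auto
qed

lemma reachable_iff_fwd_reachable: "reachable X \<longleftrightarrow> fwd_reachable X"
  by (auto simp: reachable_def fwd_reachable_iff_path)

lemma ev_representative:
  assumes "fwd_reachable X" and "e \<in> ev X"
  obtains P0 th Q0 where "fwd P0 th Q0" "fwd_reachable P0" "e = cls (P0, th, True, Q0)"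
    "occurred (pkey th) Q0 X"
proof -
  obtain P0 th Q0 where f0: "fwd P0 th Q0" and e: "e = cls (P0, th, True, Q0)"
    using assms(2)
    by (auto simp: ev_def fwd_event_def isfwd_def tlab_def src_def tgt_def is_trans_def)
  obtain P r where P: "root P" "path P r X" "0 < sharp r e"
    using assms(2) by (auto simp: ev_def)
  then obtain s where "s \<in> set r" "s \<in> e \<or> s \<in> ebar e"
    using sharp_eq_0[of r e] by fastforce
  then have "fwd_reachable P0"
    using fwd_reachable_event_member[of "(P0, th, True, Q0)" s] fwd_reachable_path[OF P(2)]
      assms(1) f0 e by auto
  moreover have "occurred (pkey th) Q0 X"
    using sharp_rooted_pos_iff[OF calculation f0 P(1,2)] P(3) e by simp
  ultimately show thesis using that f0 e by blast
qed

lemma ev_le_iff_occurred: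
  assumes "fwd_reachable P1" "fwd P1 th1 Q1" "fwd_reachable P2" "fwd P2 th2 Q2"
  shows "ev_le (cls (P1, th1, True, Q1)) (cls (P2, th2, True, Q2)) \<longleftrightarrow>
    (\<forall>Z. fwd_reachable Z \<longrightarrow> occurred (pkey th2) Q2 Z \<longrightarrow> occurred (pkey th1) Q1 Z)"
proof -
  have "ev_le (cls (P1, th1, True, Q1)) (cls (P2, th2, True, Q2)) \<longleftrightarrow>
    (\<forall>P r Q. root P \<and> path P r Q \<and> fwd_reachable P \<and> occurred (pkey th2) Q2 Q
       \<longrightarrow> occurred (pkey th1) Q1 Q)"
    unfolding ev_le_def
    using sharp_rooted_pos_iff[OF assms(1,2)] sharp_rooted_pos_iff[OF assms(3,4)] by blast
  also have "\<dots> \<longleftrightarrow>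
    (\<forall>Z. fwd_reachable Z \<longrightarrow> occurred (pkey th2) Q2 Z \<longrightarrow> occurred (pkey th1) Q1 Z)"
    using fwd_reachable_path fwd_reachable_iff_path standard_root
    by (metis fwd_reachable.standard)
  finally show ?thesis .
qed

lemma occurred_down_mono:
  assumes occ: "occurred k2 X Z" and le: "(k1, k2) \<in> (ord X)\<^sup>*"
  shows "occurred k1 X Z"
proof -
  let ?K1 = "down_set k1 X" and ?K2 = "down_set k2 X"
  have sub: "?K1 \<subseteq> ?K2" using down_set_mono[OF le] .
  have dc2: "down_closed ?K2 (ord Z)" and proj2: "proj_keys ?K2 Z = proj_keys ?K2 X"
    using occ by (auto simp: occurred_def)
  have "down_closed ?K1 (ord Z)"
    unfolding down_closed_def
  proof (intro allI impI)
    fix a b assume ab: "(a, b) \<in> ord Z" "b \<in> ?K1"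
    then have "(a, b) \<in> ord (proj_keys ?K2 Z)"
      using dc2 sub ord_proj_keys[OF dc2] by (auto simp: down_closed_def)
    then have "(a, b) \<in> ord X"
      using proj2 ord_proj_keys[OF down_closed_down_set[of k2 X]] by auto
    then show "a \<in> ?K1"
      using ab(2) down_closed_down_set[of k1 X] by (auto simp: down_closed_def)
  qed
  moreover have "proj_keys ?K1 Z = proj_keys ?K1 X"
    using proj_keys_proj_keys[of ?K1 ?K2] proj2 sub by (metis Int_absorb2)
  ultimately show ?thesis
    using occ sub by (auto simp: occurred_def)
qed

lemma occurred_implies_iff_leX:
  assumes "fwd_reachable X" "k1 \<in> keys X" "k2 \<in> keys X"
  shows "(\<forall>Z. fwd_reachable Z \<longrightarrow> occurred k2 X Z \<longrightarrow> occurred k1 X Z) \<longleftrightarrow> leX X k1 k2"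
proof
  let ?K2 = "down_set k2 X"
  let ?Z = "proj_keys ?K2 X"
  assume "\<forall>Z. fwd_reachable Z \<longrightarrow> occurred k2 X Z \<longrightarrow> occurred k1 X Z"
  moreover have "fwd_reachable ?Z"
    using fwd_reachable_proj_keys[OF assms(1) down_closed_down_set] .
  moreover have keys: "keys ?Z = ?K2"
    using keys_proj_keys[OF down_closed_down_set] down_set_subset_keys[OF assms(3)] by blast
  moreover have "occurred k2 X ?Z"
    using keys ord_proj_keys[OF down_closed_down_set, of k2 X] proj_keys_proj_keys[of ?K2 ?K2 X]
      down_closed_down_set[of k2 X]
    by (auto simp: occurred_def down_closed_def)
  ultimately have "k1 \<in> ?K2" using occurred_key_in_keys by blast
  then show "leX X k1 k2" using assms(2,3) by (simp add: leX_def down_set_def)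
qed (auto simp: leX_def intro: occurred_down_mono)

theorem theorem6p15:
  fixes X :: "'n proc" and e1 e2 :: "'n trans set"
  assumes "reachable X" and "e1 \<in> ev X" and "e2 \<in> ev X"
  shows "ev_le e1 e2 \<longleftrightarrow> leX X (key_ev e1) (key_ev e2)"
proof -
  have X: "fwd_reachable X" using assms(1) reachable_iff_fwd_reachable by blast
  obtain P1 th1 Q1 where e1: "fwd P1 th1 Q1" "fwd_reachable P1" "e1 = cls (P1, th1, True, Q1)"
    and occ1: "occurred (pkey th1) Q1 X"
    using ev_representative[OF X assms(2)] by blast
  obtain P2 th2 Q2 where e2: "fwd P2 th2 Q2" "fwd_reachable P2" "e2 = cls (P2, th2, True, Q2)"
    and occ2: "occurred (pkey th2) Q2 X"
    using ev_representative[OF X assms(3)] by blast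
  have "ev_le e1 e2 \<longleftrightarrow>
    (\<forall>Z. fwd_reachable Z \<longrightarrow> occurred (pkey th2) Q2 Z \<longrightarrow> occurred (pkey th1) Q1 Z)"
    using ev_le_iff_occurred[OF e1(2,1) e2(2,1)] e1(3) e2(3) by simp
  also have "\<dots> \<longleftrightarrow>
    (\<forall>Z. fwd_reachable Z \<longrightarrow> occurred (pkey th2) X Z \<longrightarrow> occurred (pkey th1) X Z)"
    using occurred_rebase[OF occ1] occurred_rebase[OF occ2] by simp
  also have "\<dots> \<longleftrightarrow> leX X (pkey th1) (pkey th2)"
    using occurred_implies_iff_leX[OF X] occurred_key_in_keys[OF occ1] occurred_key_in_keys[OF occ2]
    by blast
  finally show ?thesis
    using key_ev_cls[of "(P1, th1, True, Q1)"] key_ev_cls[of "(P2, th2, True, Q2)"] e1 e2 by simp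
qed

end
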